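(* Let $G$ be a $2$-tuple regular finite group and let $a,b,a',b'\in G$ be such that $a\mapsto a',b\mapsto b'$ defines an isomorphism $\langle a,b\rangle\to\langle a',b'\rangle$. If $b=gag^{-1}$ for some $g\in G$, then there exists $g'\in G$ with $\operatorname{ord}(g')=\operatorname{ord}(g)$ and $b'=g'a'g'^{-1}$.
   Context: A finite group $G$ is $2$-tuple regular if for all pairs $(g_1,g_2),(h_1,h_2)\in G^2$ (entries may coincide) for which $g_1\mapsto h_1,g_2\mapsto h_2$ defines an isomorphism $\langle g_1,g_2\rangle\to\langle h_1,h_2\rangle$, there is a bijection $\Psi\colon G\to G$ such that for every $g\in G$ the assignment $g_1\mapsto h_1,g_2\mapsto h_2,g\mapsto\Psi(g)$ defines an isomorphism $\langle g_1,g_2,g\rangle\to\langle h_1,h_2,\Psi(g)\rangle$. *)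

theory Defs
  imports "HOL-Algebra.Algebra"
begin

definition assign_iso :: "('a, 'b) monoid_scheme \<Rightarrow> 'a list \<Rightarrow> 'a list \<Rightarrow> bool" where
  "assign_iso G xs ys \<longleftrightarrow> length xs = length ys \<and>
     (\<exists>\<phi>. \<phi> \<in> iso (G\<lparr>carrier := generate G (set xs)\<rparr>) (G\<lparr>carrier := generate G (set ys)\<rparr>)
          \<and> (\<forall>i < length xs. \<phi> (xs ! i) = ys ! i))"

definition two_tuple_regular :: "('a, 'b) monoid_scheme \<Rightarrow> bool" where
  "two_tuple_regular G \<longleftrightarrow>
     (\<forall>g1 \<in> carrier G. \<forall>g2 \<in> carrier G. \<forall>h1 \<in> carrier G. \<forall>h2 \<in> carrier G.
        assign_iso G [g1, g2] [h1, h2] \<longrightarrow>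
        (\<exists>\<Psi>. bij_betw \<Psi> (carrier G) (carrier G) \<and>
             (\<forall>g \<in> carrier G. assign_iso G [g1, g2, g] [h1, h2, \<Psi> g])))"

end

theory Submission
  imports Defs
begin

text \<open>Regularity extends \<open>a \<mapsto> a', b \<mapsto> b'\<close> by some \<open>g \<mapsto> g'\<close> to an isomorphism
  \<open>\<phi>\<close> from \<open>\<langle>a, b, g\<rangle>\<close> onto \<open>\<langle>a', b', g'\<rangle>\<close>. Then \<open>b' = \<phi>(g a g\<inverse>) = g' a' g'\<inverse>\<close>, and \<open>\<phi>\<close>
  preserves the order of \<open>g\<close>, since orders computed in a subgroup agree with those in \<open>G\<close>.\<close>

lemma (in group) ord_subgroup_eq:
  assumes "subgroup H G" and "x \<in> H"
  shows "group.ord (G\<lparr>carrier := H\<rparr>) x = ord x"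
proof -
  interpret H: group "G\<lparr>carrier := H\<rparr>"
    using assms(1) by (rule subgroup_imp_group)
  have "x \<in> carrier G"
    using assms by (rule subgroup.mem_carrier)
  then show ?thesis
    using assms(2) by (simp add: H.ord_unique pow_eq_id flip: nat_pow_consistent)
qed

lemma (in group_hom) ord_hom_inj:
  assumes "inj_on h (carrier G)" and "x \<in> carrier G"
  shows "H.ord (h x) = G.ord x"
proof -
  have "h x [^]\<^bsub>H\<^esub> n = \<one>\<^bsub>H\<^esub> \<longleftrightarrow> x [^] n = \<one>" for n :: nat
  proof -
    have "h x [^]\<^bsub>H\<^esub> n = h (x [^] n)"
      using assms(2) by (simp add: hom_nat_pow)
    then show ?thesis
      using assms by (metis G.nat_pow_closed G.one_closed hom_one inj_on_eq_iff)
  qed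
  then show ?thesis
    using assms(2) by (simp add: H.ord_unique G.pow_eq_id)
qed

lemma (in group) subgroup_hom_conj:
  assumes "subgroup H G" and "subgroup K G"
    and "\<phi> \<in> hom (G\<lparr>carrier := H\<rparr>) (G\<lparr>carrier := K\<rparr>)"
    and "x \<in> H" and "y \<in> H"
  shows "\<phi> (x \<otimes> y \<otimes> inv x) = \<phi> x \<otimes> \<phi> y \<otimes> inv (\<phi> x)"
proof -
  interpret \<phi>: group_hom "G\<lparr>carrier := H\<rparr>" "G\<lparr>carrier := K\<rparr>" \<phi>
    using assms(1-3) by (simp add: group_hom_def group_hom_axioms_def subgroup_imp_group)
  have "\<phi> x \<in> K"
    using assms(4) \<phi>.hom_closed by simp
  then show ?thesis
    using assms \<phi>.hom_mult \<phi>.hom_inv by (simp add: subgroup.m_closed subgroup.m_inv_closed)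
qed

lemma (in group) subgroup_iso_ord:
  assumes "subgroup H G" and "subgroup K G"
    and "\<phi> \<in> iso (G\<lparr>carrier := H\<rparr>) (G\<lparr>carrier := K\<rparr>)" and "x \<in> H"
  shows "ord (\<phi> x) = ord x"
proof -
  interpret \<phi>: group_hom "G\<lparr>carrier := H\<rparr>" "G\<lparr>carrier := K\<rparr>" \<phi>
    using assms(1-3) by (simp add: group_hom_def group_hom_axioms_def subgroup_imp_group iso_def)
  have "inj_on \<phi> H"
    using assms(3) by (simp add: iso_def bij_betw_def)
  moreover have "\<phi> x \<in> K"
    using assms(4) \<phi>.hom_closed by simp
  ultimately show ?thesis
    using assms \<phi>.ord_hom_inj[of x] by (simp add: ord_subgroup_eq)
qed

lemma (in group) assign_isoE:
  assumes "assign_iso G xs ys" and "set xs \<subseteq> carrier G" and "set ys \<subseteq> carrier G"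
  obtains \<phi> H K where "subgroup H G" and "subgroup K G" and "set xs \<subseteq> H"
    and "\<phi> \<in> iso (G\<lparr>carrier := H\<rparr>) (G\<lparr>carrier := K\<rparr>)"
    and "\<And>i. i < length xs \<Longrightarrow> \<phi> (xs ! i) = ys ! i"
proof -
  from assms(1) obtain \<phi> where
      "\<phi> \<in> iso (G\<lparr>carrier := generate G (set xs)\<rparr>) (G\<lparr>carrier := generate G (set ys)\<rparr>)"
      and "\<forall>i < length xs. \<phi> (xs ! i) = ys ! i"
    unfolding assign_iso_def by blast
  moreover have "set xs \<subseteq> generate G (set xs)"
    by (auto intro: generate.incl)
  ultimately show ?thesis
    using assms(2,3) that by (blast intro: generate_is_subgroup)
qed

lemma two_tuple_regularD:
  assumes "two_tuple_regular G" and "assign_iso G [a, b] [a', b']"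
    and "a \<in> carrier G" and "b \<in> carrier G" and "a' \<in> carrier G" and "b' \<in> carrier G"
    and "g \<in> carrier G"
  obtains g' where "g' \<in> carrier G" and "assign_iso G [a, b, g] [a', b', g']"
  using assms unfolding two_tuple_regular_def bij_betw_def by blast

theorem lemma3p7:
  fixes G (structure)
  assumes "group G" and "finite (carrier G)" and "two_tuple_regular G"
    and "a \<in> carrier G" and "b \<in> carrier G" and "a' \<in> carrier G" and "b' \<in> carrier G"
    and "assign_iso G [a, b] [a', b']"
    and "g \<in> carrier G" and "b = g \<otimes> a \<otimes> inv g"
  shows "\<exists>g' \<in> carrier G. group.ord G g' = group.ord G g \<and> b' = g' \<otimes> a' \<otimes> inv g'"
proof -
  interpret group G by fact
  obtain g' where g': "g' \<in> carrier G" and "assign_iso G [a, b, g] [a', b', g']"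
    using two_tuple_regularD[OF assms(3,8,4-7,9)] .
  then obtain \<phi> H K where H: "subgroup H G" and K: "subgroup K G" and "{a, b, g} \<subseteq> H"
      and \<phi>: "\<phi> \<in> iso (G\<lparr>carrier := H\<rparr>) (G\<lparr>carrier := K\<rparr>)"
      and \<phi>_gens: "\<And>i. i < 3 \<Longrightarrow> \<phi> ([a, b, g] ! i) = [a', b', g'] ! i"
    using assms(4-7,9) by (elim assign_isoE) auto
  have images: "\<phi> a = a'" "\<phi> b = b'" "\<phi> g = g'"
    using \<phi>_gens[of 0] \<phi>_gens[of 1] \<phi>_gens[of 2] by simp_all
  have "b' = g' \<otimes> a' \<otimes> inv g'"
    using subgroup_hom_conj[OF H K iso_imp_homomorphism[OF \<phi>], of g a]
      assms(10) \<open>{a, b, g} \<subseteq> H\<close> images by simp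
  moreover have "ord g' = ord g"
    using subgroup_iso_ord[OF H K \<phi>, of g] \<open>{a, b, g} \<subseteq> H\<close> images by simp
  ultimately show ?thesis
    using g' by blast
qed

end
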